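(* Let $p$ be an odd prime, $n=2k$, and $\mathcal{S}=\{y\in\mathbb{F}_{p^n}: T^n_k(y)=0\}$. Let $L(x)=\sum_{j=0}^{n-1}c_jx^{p^j}$ with all $c_j\in\mathbb{F}_{p^k}$ be a linearized polynomial that permutes $\mathbb{F}_{p^n}$, let $\delta\in\mathcal{S}$, and let $s\in\{2,4,\dots,p^n-1\}$ be even. Then the mapping $$G(x)=-L(x)+(x+\delta)^s-(x+\delta)^{p^ks}$$ permutes $\mathcal{S}$, and consequently $$F(x)=L(x)+(x^{p^k}-x+\delta)^s$$ is a permutation of $\mathbb{F}_{p^n}$.
   Context: $T^n_k(\beta)=\beta+\beta^{p^k}$ for $n=2k$ is the relative trace from $\mathbb{F}_{p^n}$ to $\mathbb{F}_{p^k}$. *)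

theory Defs
  imports "HOL-Computational_Algebra.Primes"
begin

text \<open>The finite field F_{p^n} is modelled as a finite field type 'a with CARD('a) = p^n.
  The subfield F_{p^k} is the set of fixed points of x \<mapsto> x^(p^k).\<close>

definition rel_trace :: "nat \<Rightarrow> nat \<Rightarrow> 'a::field \<Rightarrow> 'a" where
  "rel_trace p k y = y + y ^ (p ^ k)"

definition subfield_elems :: "nat \<Rightarrow> nat \<Rightarrow> 'a::field set" where
  "subfield_elems p k = {z. z ^ (p ^ k) = z}"

definition linearized :: "nat \<Rightarrow> nat \<Rightarrow> (nat \<Rightarrow> 'a::field) \<Rightarrow> 'a \<Rightarrow> 'a" where
  "linearized p n c x = (\<Sum>j<n. c j * x ^ (p ^ j))"

end

theory Submission
  imports Defs "HOL-Number_Theory.Residues"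
begin

text \<open>Write \<open>q = p^k\<close>, so that \<open>x \<mapsto> x^q\<close> is an additive involution of the field,
  \<open>\<S>\<close> is its \<open>-1\<close>-eigenspace and \<open>L\<close> commutes with it. On \<open>\<S>\<close> we have
  \<open>y^(q s) = (-y)^s = y^s\<close> for even \<open>s\<close>; since \<open>x + \<delta> \<in> \<S>\<close> for \<open>x \<in> \<S>\<close>, the map \<open>G\<close> agrees
  with \<open>-L\<close> on \<open>\<S>\<close>, and \<open>-L\<close> maps \<open>\<S>\<close> injectively into itself. For \<open>F\<close>, the argument
  \<open>x^q - x + \<delta>\<close> of the power always lies in \<open>\<S>\<close>, hence \<open>F(x)^q - F(x) = L(x^q - x)\<close>; so
  \<open>F x = F y\<close> forces first \<open>x^q - x = y^q - y\<close>, then \<open>L x = L y\<close> and \<open>x = y\<close>.\<close>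

text \<open>The library's \<open>finite_field_power_card_eq_same\<close> requires the sort \<open>finite_field\<close>,
  which \<open>{field,finite}\<close> does not provide.\<close>

lemma power_card_eq_self:
  fixes x :: "'a :: {field,finite}"
  shows "x ^ card (UNIV :: 'a set) = x"
proof (cases "x = 0")
  case True
  then show ?thesis
    using finite_UNIV_card_ge_0[where 'a = 'a] by simp
next
  case False
  define U where "U = (UNIV :: 'a set) - {0}"
  have card_U: "card U = card (UNIV :: 'a set) - 1"
    unfolding U_def by (simp add: card_Diff_singleton)
  have "bij_betw ((*) x) U U"
    by (rule bij_betwI[where g = "\<lambda>y. y / x"]) (use False in \<open>auto simp: U_def\<close>)
  then have "(\<Prod>y\<in>U. x * y) = \<Prod>U"
    by (rule prod.reindex_bij_betw)
  then have "x ^ (card (UNIV :: 'a set) - 1) * \<Prod>U = \<Prod>U"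
    by (simp add: prod.distrib card_U)
  moreover have "\<Prod>U \<noteq> 0"
    unfolding U_def by simp
  ultimately have "x ^ (card (UNIV :: 'a set) - 1) = 1"
    by simp
  then have "x ^ Suc (card (UNIV :: 'a set) - 1) = x"
    by simp
  then show ?thesis
    using finite_UNIV_card_ge_0[where 'a = 'a] by simp
qed

lemma CHAR_eq_of_card_eq_prime_power:
  assumes "prime p" and "card (UNIV :: 'a :: {field,finite} set) = p ^ n"
  shows "CHAR('a) = p"
proof -
  have "prime CHAR('a)"
    by (rule prime_CHAR_semidom, rule finite_imp_CHAR_pos) simp
  moreover have "CHAR('a) dvd p ^ n"
    using CHAR_dvd_CARD[where 'a = 'a] assms(2) by simp
  ultimately show ?thesis
    using assms(1) prime_dvd_power primes_dvd_imp_eq by blast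
qed

lemma power_prime_power_add:
  assumes "prime p" and "CHAR('a :: comm_ring_1) = p"
  shows "(x + y :: 'a) ^ (p ^ j) = x ^ (p ^ j) + y ^ (p ^ j)"
  by (rule freshmans_dream') (use assms in auto)

lemma power_prime_power_minus:
  assumes "prime p" and "CHAR('a :: comm_ring_1) = p"
  shows "(- x :: 'a) ^ (p ^ j) = - (x ^ (p ^ j))"
proof -
  have "0 = (x + - x) ^ (p ^ j)"
    using prime_gt_0_nat[OF assms(1)] by (simp add: power_0_left)
  also have "\<dots> = x ^ (p ^ j) + (- x) ^ (p ^ j)"
    by (rule power_prime_power_add[OF assms])
  finally show ?thesis
    by (simp add: eq_neg_iff_add_eq_0 add.commute)
qed

lemma power_prime_power_diff:
  assumes "prime p" and "CHAR('a :: comm_ring_1) = p"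
  shows "(x - y :: 'a) ^ (p ^ j) = x ^ (p ^ j) - y ^ (p ^ j)"
  using power_prime_power_add[OF assms, of x "- y"] power_prime_power_minus[OF assms, of y]
  by simp

lemma linearized_diff:
  assumes "prime p" and "CHAR('a :: field) = p"
  shows "linearized p n c (x - y :: 'a) = linearized p n c x - linearized p n c y"
  unfolding linearized_def
  by (simp add: power_prime_power_diff[OF assms] right_diff_distrib sum_subtractf)

lemma linearized_minus:
  assumes "prime p" and "CHAR('a :: field) = p"
  shows "linearized p n c (- x :: 'a) = - linearized p n c x"
  using linearized_diff[OF assms, of n c 0 x] linearized_diff[OF assms, of n c 0 0] by simp

lemma linearized_power_prime_power:
  assumes "prime p" and "CHAR('a :: field) = p"
    and "\<forall>j<n. c j \<in> subfield_elems p k"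
  shows "linearized p n c (x :: 'a) ^ (p ^ k) = linearized p n c (x ^ (p ^ k))"
proof -
  have "linearized p n c x ^ (p ^ k) = (\<Sum>j<n. (c j * x ^ (p ^ j)) ^ (p ^ k))"
    unfolding linearized_def by (rule freshmans_dream_sum') (use assms in auto)
  also have "\<dots> = (\<Sum>j<n. c j * (x ^ (p ^ k)) ^ (p ^ j))"
  proof (rule sum.cong)
    fix j assume "j \<in> {..<n}"
    then have "c j ^ (p ^ k) = c j"
      using assms(3) by (auto simp: subfield_elems_def)
    then show "(c j * x ^ (p ^ j)) ^ (p ^ k) = c j * (x ^ (p ^ k)) ^ (p ^ j)"
      by (simp add: power_mult_distrib mult.commute flip: power_mult)
  qed simp
  finally show ?thesis
    unfolding linearized_def .
qed

lemma rel_trace_eq_0_iff: "rel_trace p k (y :: 'a :: field) = 0 \<longleftrightarrow> y ^ (p ^ k) = - y"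
  unfolding rel_trace_def by (auto simp: eq_neg_iff_add_eq_0 add.commute)

lemma rel_trace_add:
  assumes "prime p" and "CHAR('a :: field) = p"
  shows "rel_trace p k (x + y :: 'a) = rel_trace p k x + rel_trace p k y"
  unfolding rel_trace_def by (simp add: power_prime_power_add[OF assms] ac_simps)

lemma rel_trace_power_diff_self:
  assumes "prime p" and "CHAR('a :: field) = p"
    and "(x :: 'a) ^ (p ^ (2 * k)) = x"
  shows "rel_trace p k (x ^ (p ^ k) - x) = 0"
proof -
  have "(x ^ (p ^ k)) ^ (p ^ k) = x"
    using assms(3) by (simp add: mult_2 power_add flip: power_mult)
  then show ?thesis
    unfolding rel_trace_def by (simp add: power_prime_power_diff[OF assms(1,2)])
qed

lemma power_even_mult_rel_trace_kernel:
  assumes "rel_trace p k (y :: 'a :: field) = 0" and "even s"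
  shows "y ^ (p ^ k * s) = y ^ s"
  using assms by (simp add: power_mult rel_trace_eq_0_iff)

lemma rel_trace_linearized_eq_0:
  assumes "prime p" and "CHAR('a :: field) = p"
    and "\<forall>j<n. c j \<in> subfield_elems p k"
    and "rel_trace p k (x :: 'a) = 0"
  shows "rel_trace p k (linearized p n c x) = 0"
  using assms(4)
  by (simp add: rel_trace_eq_0_iff linearized_power_prime_power[OF assms(1-3)]
      linearized_minus[OF assms(1,2)])

lemma bij_betw_minus_linearized_rel_trace_kernel:
  fixes c :: "nat \<Rightarrow> 'a :: {field,finite}"
  assumes "prime p" and "CHAR('a) = p"
    and "\<forall>j<n. c j \<in> subfield_elems p k"
    and "inj (linearized p n c)"
  shows "bij_betw (\<lambda>x. - linearized p n c x) {y. rel_trace p k y = 0} {y. rel_trace p k y = 0}"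
proof -
  let ?S = "{y :: 'a. rel_trace p k y = 0}"
  have "(\<lambda>x. - linearized p n c x) ` ?S \<subseteq> ?S"
    using rel_trace_linearized_eq_0[OF assms(1-3)]
    by (auto simp: rel_trace_eq_0_iff power_prime_power_minus[OF assms(1,2)])
  moreover have "inj_on (\<lambda>x. - linearized p n c x) ?S"
    using assms(4) by (auto simp: inj_def inj_on_def)
  ultimately show ?thesis
    unfolding bij_betw_def by (simp add: endo_inj_surj)
qed

lemma inj_linearized_add_power_rel_trace:
  fixes c :: "nat \<Rightarrow> 'a :: field"
  assumes "prime p" and "CHAR('a) = p"
    and "\<forall>j<n. c j \<in> subfield_elems p k"
    and "inj (linearized p n c)"
    and "\<forall>x :: 'a. x ^ (p ^ (2 * k)) = x"
    and "rel_trace p k \<delta> = 0" and "even s"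
  shows "inj (\<lambda>x. linearized p n c x + (x ^ (p ^ k) - x + \<delta>) ^ s)"
proof (rule injI)
  let ?L = "linearized p n c" and ?q = "p ^ k"
  define F where "F x = ?L x + (x ^ ?q - x + \<delta>) ^ s" for x
  have F_conj: "F x ^ ?q - F x = ?L (x ^ ?q - x)" for x
  proof -
    have "rel_trace p k (x ^ ?q - x + \<delta>) = 0"
      using rel_trace_power_diff_self[OF assms(1,2)] assms(5,6)
      by (simp add: rel_trace_add[OF assms(1,2)])
    then have "((x ^ ?q - x + \<delta>) ^ s) ^ ?q = (x ^ ?q - x + \<delta>) ^ s"
      using power_even_mult_rel_trace_kernel[OF _ assms(7)] by (simp add: mult.commute flip: power_mult)
    then show ?thesis
      unfolding F_def
      by (simp add: power_prime_power_add[OF assms(1,2)] linearized_power_prime_power[OF assms(1-3)]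
          linearized_diff[OF assms(1,2)])
  qed
  fix x y assume "?L x + (x ^ ?q - x + \<delta>) ^ s = ?L y + (y ^ ?q - y + \<delta>) ^ s"
  then have F_eq: "F x = F y"
    unfolding F_def .
  then have "?L (x ^ ?q - x) = ?L (y ^ ?q - y)"
    by (metis F_conj)
  with assms(4) have "x ^ ?q - x = y ^ ?q - y"
    by (rule injD)
  with F_eq have "?L x = ?L y"
    unfolding F_def by simp
  with assms(4) show "x = y"
    by (rule injD)
qed

theorem proposition6:
  fixes p k n s :: nat and c :: "nat \<Rightarrow> 'a::{field,finite}" and \<delta> :: 'a
  assumes "prime p" and "odd p"
    and "n = 2 * k"
    and "card (UNIV :: 'a set) = p ^ n"
    and "\<forall>j<n. c j \<in> subfield_elems p k"
    and "bij (linearized p n c)"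
    and "\<delta> \<in> {y. rel_trace p k y = 0}"
    and "even s" and "2 \<le> s" and "s \<le> p ^ n - 1"
  shows "bij_betw (\<lambda>x. - linearized p n c x + (x + \<delta>) ^ s - (x + \<delta>) ^ (p ^ k * s))
            {y. rel_trace p k y = 0} {y. rel_trace p k y = 0}
       \<and> bij (\<lambda>x. linearized p n c x + (x ^ (p ^ k) - x + \<delta>) ^ s)"
proof
  have char: "CHAR('a) = p"
    using CHAR_eq_of_card_eq_prime_power assms(1,4) by blast
  have inj_L: "inj (linearized p n c)"
    using assms(6) by (rule bij_is_inj)
  have kernel_\<delta>: "rel_trace p k \<delta> = 0"
    using assms(7) by simp
  have G_eq: "(x + \<delta>) ^ (p ^ k * s) = (x + \<delta>) ^ s" if "rel_trace p k x = 0" for x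
    using that kernel_\<delta> assms(8)
    by (simp add: rel_trace_add[OF assms(1) char] power_even_mult_rel_trace_kernel)
  show "bij_betw (\<lambda>x. - linearized p n c x + (x + \<delta>) ^ s - (x + \<delta>) ^ (p ^ k * s))
      {y. rel_trace p k y = 0} {y. rel_trace p k y = 0}"
    using bij_betw_minus_linearized_rel_trace_kernel[OF assms(1) char assms(5) inj_L]
    by (rule bij_betw_cong[THEN iffD1, rotated]) (simp add: G_eq)
  have "\<forall>x :: 'a. x ^ (p ^ (2 * k)) = x"
    using power_card_eq_self[where 'a = 'a] assms(3,4) by simp
  then have "inj (\<lambda>x. linearized p n c x + (x ^ (p ^ k) - x + \<delta>) ^ s)"
    using inj_linearized_add_power_rel_trace[OF assms(1) char assms(5) inj_L _ kernel_\<delta> assms(8)]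
    by blast
  then show "bij (\<lambda>x. linearized p n c x + (x ^ (p ^ k) - x + \<delta>) ^ s)"
    by (simp add: bij_def finite_UNIV_inj_surj)
qed

end
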